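(* In the setting of the context, let $\{\mu_k\}_{k\in\mathbb{N}}$ be a strictly decreasing sequence of positive scalars and $\{w_k\}_{k\in\mathbb{N}}$ a sequence with $\|F^{\mu_k}(w_{k+1})\|\le\epsilon(\mu_k)$ for all $k$, such that for a subsequence indexed by $\mathcal K$, $w_{k+1}\to w^*$ as $k\in\mathcal K\to\infty$. Then for all $k\in\mathcal K$ sufficiently large, $$w^{w^*,1}_{k+1}=w_{k+1}-J_F(w_{k+1})^{-1}F^{\mu_{k+1}}(w_{k+1}),$$ i.e. $w^{w^*,1}_{k+1}-w_{k+1}$ is the Newton step for finding a root of $F^{\mu_{k+1}}$ at $w_{k+1}$.
   Context: Problem: minimize $f(x)$ subject to $c_{\mathcal I}(x)\ge0$, $c_{\mathcal E}(x)=0$, with $f,c_i\colon\mathbb{R}^n\to\mathbb{R}$, $c=(c_{\mathcal I}^T,c_{\mathcal E}^T)^T\in\mathbb{R}^m$, and $d\ge3$ the smallest number of times each of $f,c_1,\dots,c_m$ is continuously differentiable. Notation: $g=\nabla f$, $A$ the Jacobian of $c$, $H(x,\lambda)$ the Hessian in $x$ of $f(x)-\lambda^Tc(x)$, $[v]_S$ components of $v$ indexed by $S$, uppercase = diagonal matrix of the lowercase vector, $e$ the all-ones vector, $w=(x,\lambda)$. $F^\mu(x,\lambda)=\bigl(g(x)-A(x)^T\lambda;\ C_{\mathcal I}(x)[\lambda]_{\mathcal I}-\mu e;\ c_{\mathcal E}(x)\bigr)$ and $J_F$ denotes its Jacobian with respect to $w$ (independent of $\mu$). Let $x^*$ be a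 KKT point at which LICQ, strict complementarity (multiplier $\lambda^*$ with $[\lambda^*]_i>0$ for active inequality indices) and the strong second-order sufficiency condition ($p^TH(x^*,\lambda^* )p\ge\omega\|p\|^2$, $\omega>0$, for all $p$ orthogonal to all active constraint gradients) hold; $\lambda^*$ is unique; $w^*=(x^*,\lambda^* )$. Let $w^{w^*,0}$ be the locally unique $(d-1)$ times continuously differentiable function near $0$ with $F^0(w^{w^*,0}(r))=r$, $w^{w^*,0}(0)=w^*$. With $\mathrm{nml}(r)=r/\|r\|$ for $r\ne0$, $\mathrm{nml}(0)=0$, define for $\mu,r$ sufficiently small $w^{w^*,\mu,r}(\rho)=w^{w^*,0}\bigl(\rho\,\mathrm{nml}(r)+(0,\mu e^T,0)^T\bigr)$ (blocks of sizes $n,m_{\mathcal I},m_{\mathcal E}$). Set $r_{k+1}=F^{\mu_{k+1}}(w_{k+1})$ and let $w^{w^*,1}_{k+1}$ be the value at $\rho=0$ of the first-order Taylor polynomial of $\rho\mapsto w^{w^*,\mu_{k+1},r_{k+1}}(\rho)$ about $\rho=\|r_{k+1}\|$. $\epsilon$ is a positive function with $\epsilon(\mu)=\Theta(\mu)$. *)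

theory Defs
  imports "HOL-Analysis.Analysis" "HOL-Library.Landau_Symbols"
begin

text \<open>Constraint index set: a finite type 'm; the inequality indices form a set I,
  the equality indices are the complement E = - I.\<close>

fun Ck :: "nat \<Rightarrow> ('a::euclidean_space \<Rightarrow> real) \<Rightarrow> bool" where
  "Ck 0 h = continuous_on UNIV h"
| "Ck (Suc k) h = ((\<forall>x. h differentiable (at x)) \<and>
       (\<forall>v. Ck k (\<lambda>x. frechet_derivative h (at x) v)))"

definition pderiv :: "(real^'n \<Rightarrow> real) \<Rightarrow> 'n \<Rightarrow> real^'n \<Rightarrow> real" where
  "pderiv h j x = frechet_derivative h (at x) (axis j 1)"

definition grad :: "(real^'n \<Rightarrow> real) \<Rightarrow> real^'n \<Rightarrow> real^'n" where
  "grad h x = (\<chi> j. pderiv h j x)"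

definition jac :: "('m \<Rightarrow> real^'n \<Rightarrow> real) \<Rightarrow> real^'n \<Rightarrow> real^'n^'m" where
  "jac c x = (\<chi> i. grad (c i) x)"

definition hessian :: "(real^'n \<Rightarrow> real) \<Rightarrow> real^'n \<Rightarrow> real^'n^'n" where
  "hessian h x = (\<chi> j k. pderiv (\<lambda>y. pderiv h k y) j x)"

definition lag_hess :: "(real^'n \<Rightarrow> real) \<Rightarrow> ('m::finite \<Rightarrow> real^'n \<Rightarrow> real)
    \<Rightarrow> real^'n \<Rightarrow> real^'m \<Rightarrow> real^'n^'n" where
  "lag_hess f c x lam = hessian (\<lambda>y. f y - (\<Sum>i\<in>UNIV. lam $ i * c i y)) x"

definition Fmu :: "(real^'n \<Rightarrow> real) \<Rightarrow> ('m::finite \<Rightarrow> real^'n \<Rightarrow> real) \<Rightarrow> 'm set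
    \<Rightarrow> real \<Rightarrow> (real^'n) \<times> (real^'m) \<Rightarrow> (real^'n) \<times> (real^'m)" where
  "Fmu f c I mu w = (grad f (fst w) - transpose (jac c (fst w)) *v snd w,
       \<chi> i. if i \<in> I then c i (fst w) * snd w $ i - mu else c i (fst w))"

text \<open>J_F(w): Jacobian (derivative) of F^mu with respect to w (independent of mu)\<close>
definition JF :: "(real^'n \<Rightarrow> real) \<Rightarrow> ('m::finite \<Rightarrow> real^'n \<Rightarrow> real) \<Rightarrow> 'm set
    \<Rightarrow> (real^'n) \<times> (real^'m) \<Rightarrow> (real^'n) \<times> (real^'m) \<Rightarrow> (real^'n) \<times> (real^'m)" where
  "JF f c I w = frechet_derivative (Fmu f c I 0) (at w)"

definition nml :: "'a::real_normed_vector \<Rightarrow> 'a" where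
  "nml r = (if r = 0 then 0 else r /\<^sub>R norm r)"

definition shiftv :: "'m set \<Rightarrow> real \<Rightarrow> (real^'n) \<times> (real^'m)" where
  "shiftv I mu = (0, \<chi> i. if i \<in> I then mu else 0)"

text \<open>w^{w*,mu,r}(rho) for a given local inverse W = w^{w*,0}\<close>
definition wpath :: "((real^'n) \<times> (real^'m) \<Rightarrow> (real^'n) \<times> (real^'m)) \<Rightarrow> 'm set
    \<Rightarrow> real \<Rightarrow> (real^'n) \<times> (real^'m) \<Rightarrow> real \<Rightarrow> (real^'n) \<times> (real^'m)" where
  "wpath W I mu r rho = W (rho *\<^sub>R nml r + shiftv I mu)"

definition taylor1_at0 :: "((real^'n) \<times> (real^'m) \<Rightarrow> (real^'n) \<times> (real^'m)) \<Rightarrow> 'm set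
    \<Rightarrow> real \<Rightarrow> (real^'n) \<times> (real^'m) \<Rightarrow> (real^'n) \<times> (real^'m)" where
  "taylor1_at0 W I mu r = wpath W I mu r (norm r)
      + (0 - norm r) *\<^sub>R vector_derivative (wpath W I mu r) (at (norm r))"

end

theory Submission
  imports Defs
begin

text \<open>
  Differentiating \<open>F\<^sup>0(W s) = s\<close> shows that \<open>J\<^sub>F(W s)\<close> is invertible with inverse
  \<open>W'(s)\<close>. Since \<open>F\<^sup>0\<close> is \<open>C\<^sup>1\<close> with invertible derivative at \<open>w\<^sup>*\<close>, it is injective near
  \<open>w\<^sup>*\<close>, so \<open>W(F\<^sup>0 v) = v\<close> for all \<open>v\<close> close to \<open>w\<^sup>*\<close>, in particular for \<open>v = w\<^sub>k\<^sub>+\<^sub>1\<close>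
  with \<open>k \<in> K\<close> large. As \<open>F\<^sup>0(v) = F\<^sup>\<mu>(v) + (0, \<mu> e, 0)\<close>, the path
  \<open>\<rho> \<mapsto> W(\<rho> nml(r) + (0, \<mu> e, 0))\<close> with \<open>r = F\<^sup>\<mu>(v)\<close> passes through \<open>v\<close> at
  \<open>\<rho> = norm r\<close> with velocity \<open>W'(s) nml(r)\<close>, so its linearisation at \<open>\<rho> = 0\<close> is
  \<open>v - W'(s) r\<close>, the Newton step.
  In the paper, KKT, LICQ, strict complementarity and second-order sufficiency serve to produce
  the local inverse \<open>W\<close>.
\<close>

definition C1 :: "('a::real_normed_vector \<Rightarrow> 'b::real_normed_vector) \<Rightarrow> bool" where
  "C1 h \<longleftrightarrow> (\<exists>D. (\<forall>x. (h has_derivative D x) (at x)) \<and> (\<forall>v. continuous_on UNIV (\<lambda>x. D x v)))"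

lemma Ck_SucD: "Ck (Suc k) h \<Longrightarrow> Ck k h"
proof (induction k arbitrary: h)
  case 0
  then show ?case
    by (auto intro!: continuous_at_imp_continuous_on differentiable_imp_continuous_within)
next
  case (Suc k)
  then show ?case by (metis Ck.simps(2))
qed

lemma Ck_mono: "k \<le> l \<Longrightarrow> Ck l h \<Longrightarrow> Ck k h"
  by (induction l rule: dec_induct) (auto dest: Ck_SucD simp del: Ck.simps)

lemma Ck_pderiv: "Ck (Suc k) h \<Longrightarrow> Ck k (pderiv h j)"
  unfolding pderiv_def[abs_def] by simp

lemma Ck_imp_C1:
  assumes "1 \<le> k" "Ck k h"
  shows "C1 h"
proof -
  have "Ck 1 h" using Ck_mono assms by blast
  then show ?thesis
    unfolding C1_def
    by (intro exI[of _ "\<lambda>x. frechet_derivative h (at x)"]) (simp add: frechet_derivative_works)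
qed

lemma C1_const: "C1 (\<lambda>x. k)"
  unfolding C1_def by (auto intro!: exI[of _ "\<lambda>x v. 0"] derivative_eq_intros)

lemma C1_add: "C1 g \<Longrightarrow> C1 h \<Longrightarrow> C1 (\<lambda>x. g x + h x)"
  unfolding C1_def
  by (elim exE conjE, rule exI[of _ "\<lambda>x v. _ x v + _ x v"])
    (auto intro!: derivative_eq_intros continuous_intros)

lemma C1_diff: "C1 g \<Longrightarrow> C1 h \<Longrightarrow> C1 (\<lambda>x. g x - h x)"
  unfolding C1_def
  by (elim exE conjE, rule exI[of _ "\<lambda>x v. _ x v - _ x v"])
    (auto intro!: derivative_eq_intros continuous_intros)

lemma C1_mult:
  fixes g h :: "'a::real_normed_vector \<Rightarrow> real"
  assumes "C1 g" "C1 h"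
  shows "C1 (\<lambda>x. g x * h x)"
proof -
  obtain D E where D: "\<forall>x. (g has_derivative D x) (at x)" "\<forall>v. continuous_on UNIV (\<lambda>x. D x v)"
    and E: "\<forall>x. (h has_derivative E x) (at x)" "\<forall>v. continuous_on UNIV (\<lambda>x. E x v)"
    using assms unfolding C1_def by blast
  have "continuous_on UNIV g" "continuous_on UNIV h"
    using D E by (meson continuous_at_imp_continuous_on has_derivative_continuous)+
  with D E show ?thesis
    unfolding C1_def
    by (intro exI[of _ "\<lambda>x v. g x * E x v + D x v * h x"])
      (auto intro!: derivative_eq_intros continuous_intros)
qed

lemma C1_sum: "finite S \<Longrightarrow> (\<And>i. i \<in> S \<Longrightarrow> C1 (g i)) \<Longrightarrow> C1 (\<lambda>x. \<Sum>i\<in>S. g i x)"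
  by (induction S rule: finite_induct) (simp_all add: C1_const C1_add)

lemma C1_compose_fst:
  fixes h :: "'a::real_normed_vector \<Rightarrow> 'c::real_normed_vector"
  assumes "C1 h"
  shows "C1 (\<lambda>w::'a \<times> 'b::real_normed_vector. h (fst w))"
proof -
  obtain D where D: "\<forall>x. (h has_derivative D x) (at x)" "\<forall>v. continuous_on UNIV (\<lambda>x. D x v)"
    using assms unfolding C1_def by blast
  have "((\<lambda>w. h (fst w)) has_derivative (\<lambda>v. D (fst w) (fst v))) (at w)" for w :: "'a \<times> 'b"
    using D(1) by (auto intro: has_derivative_compose[OF has_derivative_fst[OF has_derivative_ident]])
  moreover have "continuous_on UNIV (\<lambda>w::'a \<times> 'b. D (fst w) (fst v))" for v :: "'a \<times> 'b"
    by (rule continuous_on_compose2[OF D(2)[rule_format] continuous_on_fst]) auto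
  ultimately show ?thesis
    unfolding C1_def by (intro exI[of _ "\<lambda>w v. D (fst w) (fst v)"]) blast
qed

lemma C1_snd_nth: "C1 (\<lambda>w. snd w $ i)"
  unfolding C1_def
  by (rule exI[of _ "\<lambda>w v. snd v $ i"])
    (auto intro!: bounded_linear_imp_has_derivative
      bounded_linear_compose[OF bounded_linear_vec_nth bounded_linear_snd])

lemma C1_componentwise:
  fixes h :: "'a::real_normed_vector \<Rightarrow> 'b::euclidean_space"
  assumes "\<And>b. b \<in> Basis \<Longrightarrow> C1 (\<lambda>x. h x \<bullet> b)"
  shows "C1 h"
proof -
  obtain D where D: "\<And>b. b \<in> Basis \<Longrightarrow> (\<forall>x. ((\<lambda>x. h x \<bullet> b) has_derivative D b x) (at x))
      \<and> (\<forall>v. continuous_on UNIV (\<lambda>x. D b x v))"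
    using assms unfolding C1_def by metis
  have h: "h = (\<lambda>x. \<Sum>b\<in>Basis. (h x \<bullet> b) *\<^sub>R b)"
    by (simp add: euclidean_representation)
  show ?thesis
    unfolding C1_def
    by (rule exI[of _ "\<lambda>x v. \<Sum>b\<in>Basis. D b x v *\<^sub>R b"], subst h)
      (use D in \<open>auto intro!: has_derivative_sum has_derivative_scaleR_left continuous_intros\<close>)
qed

lemma Fmu_C1:
  fixes f :: "real^'n \<Rightarrow> real" and c :: "'m::finite \<Rightarrow> real^'n \<Rightarrow> real"
  assumes f: "Ck 2 f" and c: "\<And>i. Ck 2 (c i)"
  shows "C1 (Fmu f c I mu)"
proof (rule C1_componentwise)
  have C1_pderiv: "C1 (pderiv h j)" if "Ck 2 h" for h :: "real^'n \<Rightarrow> real" and j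
    using Ck_imp_C1[OF order_refl Ck_pderiv[of 1]] that by (simp add: numeral_2_eq_2)
  have C1_h: "C1 h" if "Ck 2 h" for h :: "real^'n \<Rightarrow> real"
    using Ck_imp_C1[of 2] that by simp
  have "fst (Fmu f c I mu w) $ j
      = pderiv f j (fst w) - (\<Sum>i\<in>UNIV. pderiv (c i) j (fst w) * snd w $ i)" for w j
    by (simp add: Fmu_def matrix_vector_mult_def transpose_def jac_def grad_def)
  then have fst_C1: "C1 (\<lambda>w. fst (Fmu f c I mu w) $ j)" for j
    by (simp only:) (intro C1_diff C1_sum C1_mult C1_compose_fst C1_snd_nth C1_pderiv f c; simp)
  have snd_C1: "C1 (\<lambda>w. snd (Fmu f c I mu w) $ i)" for i
    by (cases "i \<in> I")
      (simp_all add: Fmu_def C1_diff C1_mult C1_compose_fst C1_snd_nth C1_const C1_h c)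
  fix b :: "(real^'n) \<times> (real^'m)"
  assume "b \<in> Basis"
  then consider (fst) j where "b = (axis j 1, 0)" | (snd) i where "b = (0, axis i 1)"
    by (auto simp: Basis_prod_def Basis_vec_def)
  then show "C1 (\<lambda>w. Fmu f c I mu w \<bullet> b)"
    by cases (simp_all add: inner_prod_def inner_axis fst_C1 snd_C1)
qed

lemma C1_locally_injective:
  fixes F :: "'a::euclidean_space \<Rightarrow> 'b::euclidean_space"
  assumes "C1 F" "bounded_linear G" "G \<circ> frechet_derivative F (at a) = id"
  obtains r where "r > 0" "inj_on F (ball a r)"
proof -
  obtain D where D: "\<forall>x. (F has_derivative D x) (at x)" "\<forall>v. continuous_on UNIV (\<lambda>x. D x v)"
    using assms(1) unfolding C1_def by blast
  have "frechet_derivative F (at a) = D a"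
    using D(1) frechet_derivative_at by metis
  define B where "B x = Blinfun (D x)" for x
  have B_apply: "blinfun_apply (B x) = D x" for x
    using D(1) has_derivative_bounded_linear bounded_linear_Blinfun_apply unfolding B_def by blast
  \<comment> \<open>In finite dimensions, continuity of each \<open>x \<mapsto> D x v\<close> gives operator-norm continuity.\<close>
  have "continuous (at a) B"
    by (rule continuous_blinfun_componentwiseI1)
      (use D(2) in \<open>simp add: B_apply continuous_on_eq_continuous_at\<close>)
  moreover have "dist (B x) (B a) = onorm (\<lambda>v. D x v - D a v)" for x
    by (simp add: dist_norm norm_blinfun.rep_eq minus_blinfun.rep_eq B_apply)
  ultimately have "\<exists>d>0. \<forall>x. dist a x < d \<longrightarrow> onorm (\<lambda>v. D x v - D a v) < e" if "e > 0" for e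
    using that unfolding continuous_at_eps_delta by (metis dist_commute)
  then show thesis
    using has_derivative_locally_injective[of a UNIV G D F] assms(2,3) D(1)
      \<open>frechet_derivative F (at a) = D a\<close> that by auto
qed

lemma right_inverse_derivative:
  assumes "open U" "s \<in> U" "\<forall>t\<in>U. F (W t) = t"
    and "F differentiable (at (W s))" "(W has_derivative W') (at s)"
  shows "frechet_derivative F (at (W s)) \<circ> W' = id"
proof (rule has_derivative_unique)
  show "((F \<circ> W) has_derivative frechet_derivative F (at (W s)) \<circ> W') (at s)"
    using assms(4,5) by (intro diff_chain_at) (simp_all add: frechet_derivative_works)
  have "((\<lambda>t. t) has_derivative id) (at s)"
    by (simp add: id_def)
  then show "((F \<circ> W) has_derivative id) (at s)"
    by (rule has_derivative_transform_within_open[OF _ assms(1,2)]) (use assms(3) in simp)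
qed

lemma linear_right_inverse_bij:
  fixes L :: "'a::euclidean_space \<Rightarrow> 'a"
  assumes "linear L" "L \<circ> M = id"
  shows "bij L" "inv L = M"
proof -
  have "surj L"
    using assms(2) by (metis comp_apply id_apply surjI)
  with linear_surj_imp_inj[OF assms(1)] show "bij L"
    by (simp add: bij_def)
  then show "inv L = M"
    using assms(2) by (metis bij_is_inj comp_apply id_apply inv_f_f ext)
qed

lemma right_inverse_eventually_left_inverse:
  fixes F :: "'a::euclidean_space \<Rightarrow> 'a"
  assumes "C1 F" "open U" "b \<in> U" "\<forall>t\<in>U. F (W t) = t" "\<forall>t\<in>U. W differentiable (at t)"
  shows "\<forall>\<^sub>F v in nhds (W b). F v \<in> U \<and> W (F v) = v"
proof -
  define a where "a = W b"
  define W' where "W' = frechet_derivative W (at b)"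
  have W': "(W has_derivative W') (at b)"
    using assms(3,5) frechet_derivative_works unfolding W'_def by blast
  have F_diff: "F differentiable (at x)" for x
    using assms(1) unfolding C1_def differentiable_def by blast
  have F'W': "frechet_derivative F (at a) \<circ> W' = id"
    using right_inverse_derivative[OF assms(2,3,4) F_diff W'] unfolding a_def .
  have lin_F': "linear (frechet_derivative F (at a))"
    using F_diff frechet_derivative_works has_derivative_linear by blast
  have bl_W': "bounded_linear W'"
    using W' has_derivative_bounded_linear by blast
  have "W' \<circ> frechet_derivative F (at a) = id"
    using linear_inverse_left[OF lin_F' bounded_linear.linear[OF bl_W']] F'W' by simp
  then obtain \<rho> where "\<rho> > 0" and inj: "inj_on F (ball a \<rho>)"
    by (rule C1_locally_injective[OF assms(1) bl_W'])
  have "isCont W b"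
    using W' has_derivative_continuous by blast
  then have "(W \<longlongrightarrow> a) (nhds b)"
    unfolding a_def by (rule isCont_tendsto_compose[OF _ filterlim_ident])
  then have "\<forall>\<^sub>F t in nhds b. W t \<in> ball a \<rho>"
    using \<open>\<rho> > 0\<close> by (intro topological_tendstoD) auto
  with eventually_nhds_in_open[OF assms(2,3)] have "\<forall>\<^sub>F t in nhds b. t \<in> U \<and> W t \<in> ball a \<rho>"
    by (rule eventually_conj)
  moreover have "isCont F a"
    using F_diff differentiable_imp_continuous_within by blast
  then have "(F \<longlongrightarrow> b) (nhds a)"
    using isCont_tendsto_compose[OF _ filterlim_ident] assms(3,4) unfolding a_def by fastforce
  ultimately have "\<forall>\<^sub>F v in nhds a. F v \<in> U \<and> W (F v) \<in> ball a \<rho>"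
    by (rule eventually_compose_filterlim)
  moreover have "\<forall>\<^sub>F v in nhds a. v \<in> ball a \<rho>"
    using \<open>\<rho> > 0\<close> by (intro eventually_nhds_in_open) auto
  ultimately show ?thesis
    unfolding a_def[symmetric]
  proof eventually_elim
    case (elim v)
    then have "F (W (F v)) = F v"
      using assms(4) by blast
    with elim inj show "F v \<in> U \<and> W (F v) = v"
      by (auto dest: inj_onD)
  qed
qed

lemma Fmu_plus_shiftv: "Fmu f c I mu w + shiftv I mu = Fmu f c I 0 w"
  by (simp add: Fmu_def shiftv_def vec_eq_iff)

lemma taylor1_at0_eq:
  assumes W': "(W has_derivative W') (at (r + shiftv I mu))"
  shows "taylor1_at0 W I mu r = W (r + shiftv I mu) - W' r"
proof -
  have r: "norm r *\<^sub>R nml r = r"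
    by (simp add: nml_def)
  have W'_scale: "W' (t *\<^sub>R v) = t *\<^sub>R W' v" for t v
    using linear_scale[OF has_derivative_linear[OF W']] .
  have "((\<lambda>t. t *\<^sub>R nml r + shiftv I mu) has_derivative (\<lambda>t. t *\<^sub>R nml r)) (at (norm r))"
    by (auto intro!: derivative_eq_intros)
  moreover have "(W has_derivative W') (at (norm r *\<^sub>R nml r + shiftv I mu))"
    using W' r by simp
  ultimately have "(wpath W I mu r has_derivative (\<lambda>t. W' (t *\<^sub>R nml r))) (at (norm r))"
    unfolding wpath_def[abs_def] by (rule has_derivative_compose)
  then have "vector_derivative (wpath W I mu r) (at (norm r)) = W' (nml r)"
    by (intro vector_derivative_at) (simp add: has_vector_derivative_def W'_scale)
  then show ?thesis
    using r W'_scale[of "norm r" "nml r"] by (simp add: taylor1_at0_def wpath_def)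
qed

lemma taylor1_at0_eq_newton_step:
  assumes "open U" and W_inv: "\<forall>t\<in>U. Fmu f c I 0 (W t) = t"
    and W_diff: "\<forall>t\<in>U. W differentiable (at t)"
    and F0_diff: "Fmu f c I 0 differentiable (at v)"
    and v: "Fmu f c I 0 v \<in> U" "W (Fmu f c I 0 v) = v"
  shows "bij (JF f c I v)
    \<and> taylor1_at0 W I mu (Fmu f c I mu v) = v - inv (JF f c I v) (Fmu f c I mu v)"
proof -
  define s where "s = Fmu f c I mu v + shiftv I mu"
  have s: "s \<in> U" "W s = v"
    using v unfolding s_def Fmu_plus_shiftv .
  define W' where "W' = frechet_derivative W (at s)"
  have W': "(W has_derivative W') (at s)"
    using W_diff s(1) frechet_derivative_works unfolding W'_def by blast
  have "JF f c I v \<circ> W' = id"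
    using right_inverse_derivative[OF \<open>open U\<close> s(1) W_inv _ W'] F0_diff s(2)
    unfolding JF_def by simp
  moreover have "linear (JF f c I v)"
    using F0_diff frechet_derivative_works has_derivative_linear unfolding JF_def by blast
  ultimately have "bij (JF f c I v)" "inv (JF f c I v) = W'"
    using linear_right_inverse_bij by blast+
  then show ?thesis
    using taylor1_at0_eq[OF W'[unfolded s_def]] s(2) unfolding s_def by simp
qed

theorem proposition1:
  fixes f :: "real^'n \<Rightarrow> real" and c :: "'m::finite \<Rightarrow> real^'n \<Rightarrow> real"
    and I :: "'m set" and d :: nat
    and xs :: "real^'n" and ls :: "real^'m" and omega :: real
    and W :: "(real^'n) \<times> (real^'m) \<Rightarrow> (real^'n) \<times> (real^'m)" and U :: "((real^'n) \<times> (real^'m)) set"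
    and eps :: "real \<Rightarrow> real" and mu :: "nat \<Rightarrow> real"
    and w :: "nat \<Rightarrow> (real^'n) \<times> (real^'m)" and K :: "nat set"
  assumes d3: "d \<ge> 3"
    and smooth_f: "Ck d f" and smooth_c: "\<forall>i. Ck d (c i)"
    \<comment> \<open>KKT point x* with multiplier lambda*\<close>
    and kkt_stat: "grad f xs - transpose (jac c xs) *v ls = 0"
    and kkt_ineq: "\<forall>i\<in>I. c i xs \<ge> 0 \<and> ls $ i \<ge> 0 \<and> ls $ i * c i xs = 0"
    and kkt_eq: "\<forall>i\<in>-I. c i xs = 0"
    \<comment> \<open>LICQ: gradients of active constraints are linearly independent\<close>
    and licq: "inj_on (\<lambda>i. grad (c i) xs) {i. i \<notin> I \<or> c i xs = 0}
               \<and> independent ((\<lambda>i. grad (c i) xs) ` {i. i \<notin> I \<or> c i xs = 0})"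
    \<comment> \<open>strict complementarity\<close>
    and strict_comp: "\<forall>i\<in>I. c i xs = 0 \<longrightarrow> ls $ i > 0"
    \<comment> \<open>strong second-order sufficiency\<close>
    and omega_pos: "omega > 0"
    and ssosc: "\<forall>p. (\<forall>i. (i \<notin> I \<or> c i xs = 0) \<longrightarrow> grad (c i) xs \<bullet> p = 0)
                   \<longrightarrow> p \<bullet> (lag_hess f c xs ls *v p) \<ge> omega * (norm p)\<^sup>2"
    \<comment> \<open>W = w^{w*,0}: the local inverse of F^0 near 0 with W(0) = w*\<close>
    and U_open: "open U" and U0: "0 \<in> U"
    and W0: "W 0 = (xs, ls)"
    and W_inv: "\<forall>r\<in>U. Fmu f c I 0 (W r) = r"
    and W_diff: "\<forall>r\<in>U. W differentiable (at r)"
    \<comment> \<open>epsilon positive with epsilon(mu) = Theta(mu)\<close>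
    and eps_pos: "\<forall>m>0. eps m > 0"
    and eps_Theta: "eps \<in> \<Theta>[at_right 0](\<lambda>m. m)"
    \<comment> \<open>the iterates\<close>
    and mu_pos: "\<forall>k. mu k > 0" and mu_dec: "\<forall>k. mu (Suc k) < mu k"
    and w_res: "\<forall>k. norm (Fmu f c I (mu k) (w (Suc k))) \<le> eps (mu k)"
    and K_inf: "infinite K"
    and w_conv: "\<forall>e>0. \<exists>N. \<forall>k\<in>K. k \<ge> N \<longrightarrow> dist (w (Suc k)) (xs, ls) < e"
  shows "\<exists>N. \<forall>k\<in>K. k \<ge> N \<longrightarrow>
           bij (JF f c I (w (Suc k))) \<and>
           taylor1_at0 W I (mu (Suc k)) (Fmu f c I (mu (Suc k)) (w (Suc k)))
             = w (Suc k) - inv (JF f c I (w (Suc k))) (Fmu f c I (mu (Suc k)) (w (Suc k)))"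
proof -
  define F0 where "F0 = Fmu f c I 0"
  have "2 \<le> d"
    using d3 by simp
  then have "C1 F0"
    unfolding F0_def using Ck_mono smooth_f smooth_c by (intro Fmu_C1) blast+
  then have F0_diff: "F0 differentiable (at v)" for v
    unfolding C1_def differentiable_def by blast
  have "\<forall>\<^sub>F v in nhds (W 0). F0 v \<in> U \<and> W (F0 v) = v"
    by (rule right_inverse_eventually_left_inverse[OF \<open>C1 F0\<close> U_open U0])
      (use W_inv W_diff in \<open>simp_all add: F0_def\<close>)
  then obtain \<delta> where "\<delta> > 0" and near: "\<forall>v. dist v (xs, ls) < \<delta> \<longrightarrow> F0 v \<in> U \<and> W (F0 v) = v"
    unfolding W0 eventually_nhds_metric by blast
  with w_conv obtain N where N: "\<forall>k\<in>K. k \<ge> N \<longrightarrow> dist (w (Suc k)) (xs, ls) < \<delta>"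
    by blast
  have "bij (JF f c I v) \<and> taylor1_at0 W I m (Fmu f c I m v) = v - inv (JF f c I v) (Fmu f c I m v)"
    if "dist v (xs, ls) < \<delta>" for v m
    using taylor1_at0_eq_newton_step[OF U_open W_inv W_diff] F0_diff near that
    unfolding F0_def by blast
  with N show ?thesis
    by blast
qed

end
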